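(* For integers $s,t\ge 7$, $${\rm dim}_s(C_s\diamond C_t)=st-4\min\{\lfloor s/3\rfloor,\lfloor t/3\rfloor\}-r,$$ where $r=0$ if $\min\{s,t\}\equiv 0$ or $1 \pmod 3$; $r=1$ if $s=t$ and $\min\{s,t\}\equiv 2\pmod 3$; and $r=2$ if $s\neq t$ and $\min\{s,t\}\equiv 2\pmod 3$.
   Context: The modular product $G\diamond H$ has vertex set $V(G)\times V(H)$; distinct vertices $(g,h)$ and $(g',h')$ are adjacent iff ($g=g'$ and $hh'\in E(H)$), or ($gg'\in E(G)$ and $h=h'$), or ($gg'\in E(G)$ and $hh'\in E(H)$), or ($g\neq g'$, $h\neq h'$, $gg'\notin E(G)$ and $hh'\notin E(H)$). $C_n$ is the cycle on $n$ vertices. For a connected graph $X$, a vertex $z$ strongly resolves distinct vertices $x,y$ if $d_X(y,z)=d_X(y,x)+d_X(x,z)$ or $d_X(x,z)=d_X(x,y)+d_X(y,z)$; ${\rm dim}_s(X)$ is the minimum cardinality of a set $S\subseteq V(X)$ such that every pair of distinct vertices is strongly resolved by some vertex of $S$. *)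

theory Defs
  imports Main
begin

text \<open>A (simple) graph is given by a vertex set V and an adjacency relation E
  (assumed symmetric and irreflexive on V for the graphs we use).\<close>

inductive walk :: "'a set \<Rightarrow> ('a \<Rightarrow> 'a \<Rightarrow> bool) \<Rightarrow> 'a \<Rightarrow> nat \<Rightarrow> 'a \<Rightarrow> bool"
  for V E where
  walk_refl: "x \<in> V \<Longrightarrow> walk V E x 0 x"
| walk_step: "walk V E x n y \<Longrightarrow> z \<in> V \<Longrightarrow> E y z \<Longrightarrow> walk V E x (Suc n) z"

definition gdist :: "'a set \<Rightarrow> ('a \<Rightarrow> 'a \<Rightarrow> bool) \<Rightarrow> 'a \<Rightarrow> 'a \<Rightarrow> nat" where
  "gdist V E x y = (LEAST n. walk V E x n y)"

definition connected_graph :: "'a set \<Rightarrow> ('a \<Rightarrow> 'a \<Rightarrow> bool) \<Rightarrow> bool" where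
  "connected_graph V E \<longleftrightarrow> V \<noteq> {} \<and> (\<forall>x\<in>V. \<forall>y\<in>V. \<exists>n. walk V E x n y)"

definition strongly_resolves :: "'a set \<Rightarrow> ('a \<Rightarrow> 'a \<Rightarrow> bool) \<Rightarrow> 'a \<Rightarrow> 'a \<Rightarrow> 'a \<Rightarrow> bool" where
  "strongly_resolves V E z x y \<longleftrightarrow>
     gdist V E y z = gdist V E y x + gdist V E x z \<or>
     gdist V E x z = gdist V E x y + gdist V E y z"

definition strong_resolving_set :: "'a set \<Rightarrow> ('a \<Rightarrow> 'a \<Rightarrow> bool) \<Rightarrow> 'a set \<Rightarrow> bool" where
  "strong_resolving_set V E S \<longleftrightarrow> S \<subseteq> V \<and>
     (\<forall>x\<in>V. \<forall>y\<in>V. x \<noteq> y \<longrightarrow> (\<exists>z\<in>S. strongly_resolves V E z x y))"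

definition sdim :: "'a set \<Rightarrow> ('a \<Rightarrow> 'a \<Rightarrow> bool) \<Rightarrow> nat" where
  "sdim V E = (LEAST k. \<exists>S. strong_resolving_set V E S \<and> card S = k)"

definition cycle_V :: "nat \<Rightarrow> nat set" where
  "cycle_V n = {0..<n}"

definition cycle_E :: "nat \<Rightarrow> nat \<Rightarrow> nat \<Rightarrow> bool" where
  "cycle_E n i j \<longleftrightarrow> i < n \<and> j < n \<and> (j = (i + 1) mod n \<or> i = (j + 1) mod n) \<and> i \<noteq> j"

definition modprod_V :: "'a set \<Rightarrow> 'b set \<Rightarrow> ('a \<times> 'b) set" where
  "modprod_V VG VH = VG \<times> VH"

definition modprod_E :: "('a \<Rightarrow> 'a \<Rightarrow> bool) \<Rightarrow> ('b \<Rightarrow> 'b \<Rightarrow> bool)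
    \<Rightarrow> ('a \<times> 'b) \<Rightarrow> ('a \<times> 'b) \<Rightarrow> bool" where
  "modprod_E EG EH = (\<lambda>(g, h) (g', h').
     (g, h) \<noteq> (g', h') \<and>
     ((g = g' \<and> EH h h') \<or> (EG g g' \<and> h = h') \<or> (EG g g' \<and> EH h h') \<or>
      (g \<noteq> g' \<and> h \<noteq> h' \<and> \<not> EG g g' \<and> \<not> EH h h')))"

end

theory Submission
  imports Defs
begin

text \<open>For s, t \<ge> 7 any two vertices of the modular product of C_s and C_t have a common
  neighbour, and for every edge xy some neighbour of x is not adjacent to y. So exactly the
  non-adjacent pairs are mutually maximally distant, a set is strongly resolving iff its
  complement is a clique, and the strong metric dimension is st minus the clique number.

  A clique is a set K of cells in which two cells are near (equal or adjacent) in the first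
  coordinate iff they are near in the second. A row of K holds at most two cells and three
  consecutive nonempty rows hold one cell each, so three consecutive rows hold at most four cells.
  Cutting the cycle of rows at an empty row gives at most 4\<lfloor>s/3\<rfloor> cells, plus 2 if
  s \<equiv> 2 (mod 3). For s = t \<equiv> 2 (mod 3) one cell fewer fits: either a row with two cells is
  flanked by empty rows, and then the columns around it read 0, 1, 1, 0, or every row with two
  cells has a nonempty neighbour, which sharpens the count. The 2 \<times> 2 blocks on {3k, 3k+1},
  together with one or two cells in row 3\<lfloor>s/3\<rfloor> when s \<equiv> 2 (mod 3), attain the bound.\<close>

section \<open>Strong resolving sets in graphs of diameter two\<close>

definition clique :: "'a set \<Rightarrow> ('a \<Rightarrow> 'a \<Rightarrow> bool) \<Rightarrow> 'a set \<Rightarrow> bool" where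
  "clique V E K \<longleftrightarrow> K \<subseteq> V \<and> (\<forall>x\<in>K. \<forall>y\<in>K. x \<noteq> y \<longrightarrow> E x y)"

lemma walk_0_iff: "walk V E x 0 y \<longleftrightarrow> x \<in> V \<and> y = x"
  by (auto elim: walk.cases intro: walk_refl)

lemma walk_Suc_0_iff: "walk V E x (Suc 0) y \<longleftrightarrow> x \<in> V \<and> y \<in> V \<and> E x y"
  by (auto elim: walk.cases simp: walk_0_iff intro: walk.intros)

locale diameter_two_graph =
  fixes V :: "'a set" and E :: "'a \<Rightarrow> 'a \<Rightarrow> bool"
  assumes sym: "E x y \<Longrightarrow> E y x"
    and common_neighbour: "x \<in> V \<Longrightarrow> y \<in> V \<Longrightarrow> \<exists>z\<in>V. E x z \<and> E z y"
begin

lemma gdist_eq: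
  assumes "x \<in> V" "y \<in> V"
  shows "gdist V E x y = (if x = y then 0 else if E x y then 1 else 2)"
  unfolding gdist_def
proof (rule Least_equality)
  obtain z where "z \<in> V" "E x z" "E z y" using common_neighbour assms by blast
  then have "walk V E x 2 y"
    using walk_step[OF walk_step[OF walk_refl]] assms by (simp add: numeral_2_eq_2)
  then show "walk V E x (if x = y then 0 else if E x y then 1 else 2) y"
    using assms by (simp add: walk_0_iff walk_Suc_0_iff)
next
  fix n assume "walk V E x n y"
  then show "(if x = y then 0 else if E x y then 1 else 2) \<le> n"
    by (cases "n < 2") (auto simp: less_2_cases_iff walk_0_iff walk_Suc_0_iff)
qed

text \<open>In a graph of diameter two every non-adjacent pair is mutually maximally distant, while
  the hypothesis on edges says that no adjacent pair is.\<close>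

lemma strong_resolving_set_iff_clique_complement:
  assumes escape: "\<And>x y. x \<in> V \<Longrightarrow> y \<in> V \<Longrightarrow> E x y \<Longrightarrow> \<exists>z\<in>V. E x z \<and> z \<noteq> y \<and> \<not> E y z"
    and "S \<subseteq> V"
  shows "strong_resolving_set V E S \<longleftrightarrow> clique V E (V - S)"
proof
  assume S: "strong_resolving_set V E S"
  show "clique V E (V - S)" unfolding clique_def
  proof (intro conjI ballI impI)
    fix x y assume x: "x \<in> V - S" and y: "y \<in> V - S" and "x \<noteq> y"
    then obtain z where "z \<in> S" "strongly_resolves V E z x y"
      using S unfolding strong_resolving_set_def by blast
    moreover have "z \<in> V" "z \<noteq> x" "z \<noteq> y" using \<open>z \<in> S\<close> assms(2) x y by auto
    moreover have "\<not> E y x" if "\<not> E x y" using that sym by blast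
    ultimately show "E x y"
      using \<open>x \<noteq> y\<close> x y unfolding strongly_resolves_def
      by (simp add: gdist_eq) (cases "E x y"; simp split: if_split_asm)
  qed simp
next
  assume K: "clique V E (V - S)"
  have "\<exists>z\<in>S. strongly_resolves V E z x y" if xy: "x \<in> V" "y \<in> V" "x \<noteq> y" for x y
  proof (cases "x \<in> S \<or> y \<in> S")
    case True
    have "strongly_resolves V E x x y" "strongly_resolves V E y x y"
      using xy by (simp_all add: strongly_resolves_def gdist_eq)
    then show ?thesis using True by blast
  next
    case False
    then have "E x y" using K xy unfolding clique_def by blast
    then obtain z where z: "z \<in> V" "E x z" "z \<noteq> y" "\<not> E y z" using escape xy by blast
    then have "z \<in> S" using K xy(2) False unfolding clique_def by (metis DiffI)
    moreover have "z \<noteq> x" using z \<open>E x y\<close> sym by blast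
    moreover have "gdist V E y z = gdist V E y x + gdist V E x z"
      using z xy \<open>z \<noteq> x\<close> \<open>E x y\<close> sym by (simp add: gdist_eq)
    ultimately show ?thesis unfolding strongly_resolves_def by blast
  qed
  then show "strong_resolving_set V E S" using assms(2) unfolding strong_resolving_set_def by blast
qed

end

lemma sdim_eq_card_minus_clique_number:
  assumes "finite V"
    and iff: "\<And>S. S \<subseteq> V \<Longrightarrow> strong_resolving_set V E S \<longleftrightarrow> clique V E (V - S)"
    and K: "clique V E K" and max: "\<And>K'. clique V E K' \<Longrightarrow> card K' \<le> card K"
  shows "sdim V E = card V - card K"
  unfolding sdim_def
proof (rule Least_equality)
  have "K \<subseteq> V" using K unfolding clique_def by simp
  moreover have "V - (V - K) = K" using \<open>K \<subseteq> V\<close> by blast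
  ultimately have "strong_resolving_set V E (V - K)" "card (V - K) = card V - card K"
    using iff[of "V - K"] K \<open>finite V\<close> by (simp_all add: card_Diff_subset finite_subset)
  then show "\<exists>S. strong_resolving_set V E S \<and> card S = card V - card K" by blast
next
  fix k assume "\<exists>S. strong_resolving_set V E S \<and> card S = k"
  then obtain S where S: "strong_resolving_set V E S" "card S = k" by blast
  then have "S \<subseteq> V" unfolding strong_resolving_set_def by simp
  then have "card V - card S \<le> card K"
    using max[of "V - S"] iff S \<open>finite V\<close> by (simp add: card_Diff_subset finite_subset)
  then show "card V - card K \<le> k" using S by linarith
qed

definition cycle_near :: "nat \<Rightarrow> nat \<Rightarrow> nat \<Rightarrow> bool" where
  "cycle_near n i j \<longleftrightarrow> i = j \<or> cycle_E n i j"

lemma cycle_E_irrefl: "\<not> cycle_E n i i"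
  by (simp add: cycle_E_def)

lemma cycle_near_refl [simp]: "cycle_near n i i"
  by (simp add: cycle_near_def)

lemma cycle_near_sym: "cycle_near n i j \<longleftrightarrow> cycle_near n j i"
  unfolding cycle_near_def cycle_E_def by auto

lemma cycle_near_iff:
  assumes "i < n" "j < n"
  shows "cycle_near n i j \<longleftrightarrow>
    i = j \<or> j = i + 1 \<or> i = j + 1 \<or> (i + 1 = n \<and> j = 0) \<or> (j + 1 = n \<and> i = 0)"
  using assms unfolding cycle_near_def cycle_E_def by (auto simp: mod_Suc)

lemma mod_Suc_Suc_cases:
  assumes "0 < n"
  obtains "Suc g mod n = Suc (g mod n)" "Suc (Suc g) mod n = Suc (Suc (g mod n))" "Suc (Suc (g mod n)) < n"
    | "Suc g mod n = Suc (g mod n)" "Suc (Suc g) mod n = 0" "Suc (Suc (g mod n)) = n"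
    | "Suc g mod n = 0" "Suc (Suc g) mod n = 1 mod n" "Suc (g mod n) = n"
proof -
  have "g mod n < n" using assms by simp
  then consider "Suc (Suc (g mod n)) < n" | "Suc (Suc (g mod n)) = n" | "Suc (g mod n) = n" by linarith
  then show ?thesis using that by cases (simp_all add: mod_Suc)
qed

lemma mod_Suc_neq: "2 \<le> n \<Longrightarrow> Suc g mod n \<noteq> g mod n"
  by (auto simp: mod_Suc)

lemma cycle_near_Suc:
  assumes "0 < n" shows "cycle_near n (g mod n) (Suc g mod n)"
proof -
  have "g mod n < n" using assms by simp
  then show ?thesis by (cases "Suc (g mod n) = n") (simp_all add: mod_Suc cycle_near_iff)
qed

lemma cycle_not_near_Suc_Suc:
  assumes "5 \<le> n" shows "\<not> cycle_near n (g mod n) (Suc (Suc g) mod n)"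
proof -
  have "0 < n" "g mod n < n" using assms by simp_all
  from \<open>0 < n\<close> show ?thesis
    by (cases rule: mod_Suc_Suc_cases[of n g]) (use assms \<open>g mod n < n\<close> in \<open>auto simp: cycle_near_iff\<close>)
qed

lemma cycle_near_Suc_cases:
  assumes "0 < n" "x < n" "cycle_near n (Suc g mod n) x"
  shows "x = g mod n \<or> x = Suc g mod n \<or> x = Suc (Suc g) mod n"
proof -
  have "g mod n < n" using assms by simp
  from \<open>0 < n\<close> show ?thesis
    by (cases rule: mod_Suc_Suc_cases[of n g]) (use assms \<open>g mod n < n\<close> in \<open>auto simp: cycle_near_iff\<close>)
qed

lemma cycle_near_obtain_Suc:
  assumes "0 < n" "p < n" "q < n" "p \<noteq> q" "cycle_near n p q"
  obtains k where "{p, q} = {Suc k mod n, Suc (Suc k) mod n}"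
proof -
  have shift: "Suc (i + n - 1) mod n = i" "Suc (Suc (i + n - 1)) mod n = Suc i mod n" if "i < n" for i
    using that \<open>0 < n\<close> by (simp_all add: Suc_diff_Suc flip: add_Suc)
  have "q = Suc p mod n \<or> p = Suc q mod n"
    using assms by (auto simp: cycle_near_iff mod_Suc)
  then show ?thesis
    using that[of "p + n - 1"] that[of "q + n - 1"] shift assms(2,3) by (auto simp: insert_commute)
qed

lemma cycle_exists_far:
  assumes "7 \<le> n" "a < n" "b < n"
  obtains c where "c < n" "\<not> cycle_near n a c" "\<not> cycle_near n b c"
proof -
  let ?succ = "\<lambda>i. if Suc i = n then 0 else Suc i" and ?pred = "\<lambda>i. if i = 0 then n - 1 else i - 1"
  have "\<exists>c<n. \<not> cycle_near n a c \<and> \<not> cycle_near n b c"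
  proof (rule ccontr)
    assume "\<not> ?thesis"
    then have "{0..<n} \<subseteq> set [a, ?succ a, ?pred a, b, ?succ b, ?pred b]"
      using assms by (auto simp: cycle_near_iff)
    then have "card {0..<n} \<le> length [a, ?succ a, ?pred a, b, ?succ b, ?pred b]"
      using card_mono[OF finite_set] card_length order.trans by blast
    then show False using assms by simp
  qed
  then show ?thesis using that by blast
qed

lemma cycle_exists_private_near:
  assumes "5 \<le> n" "h < n" "h' < n" "h \<noteq> h'"
  obtains c where "c < n" "cycle_near n h' c" "\<not> cycle_near n h c"
proof -
  let ?succ = "\<lambda>i. if Suc i = n then 0 else Suc i" and ?pred = "\<lambda>i. if i = 0 then n - 1 else i - 1"
  have "\<exists>c\<in>{h', ?succ h', ?pred h'}. \<not> cycle_near n h c"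
    using assms by (auto simp: cycle_near_iff)
  moreover have "cycle_near n h' c" if "c \<in> {h', ?succ h', ?pred h'}" for c
    using that assms by (auto simp: cycle_near_iff)
  moreover have "c < n" if "c \<in> {h', ?succ h', ?pred h'}" for c
    using that assms by auto
  ultimately show ?thesis using that by blast
qed

lemma cycle_near_triangle:
  assumes "4 \<le> n" "a < n" "b < n" "c < n"
    and "cycle_near n a b" "cycle_near n b c" "cycle_near n a c"
  shows "a = b \<or> b = c \<or> a = c"
  using assms by (simp add: cycle_near_iff) arith

lemma cycle_near_middle_unique:
  assumes "5 \<le> n" "a < n" "b < n" "b' < n" "c < n" "\<not> cycle_near n a c"
    and "cycle_near n a b" "cycle_near n b c" "cycle_near n a b'" "cycle_near n b' c"
  shows "b = b'"
  using assms unfolding cycle_near_iff[OF assms(2,3)] cycle_near_iff[OF assms(3,5)]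
    cycle_near_iff[OF assms(2,4)] cycle_near_iff[OF assms(4,5)] cycle_near_iff[OF assms(2,5)]
  by auto

lemma cycle_near_away_from_wrap:
  "a + 2 \<le> n \<Longrightarrow> b + 2 \<le> n \<Longrightarrow> cycle_near n a b \<longleftrightarrow> a = b \<or> a = b + 1 \<or> b = a + 1"
  by (subst cycle_near_iff) auto

lemma cycle_near_block_offsets:
  assumes "i \<le> 1" "i' \<le> 1" "3 * k + i + 2 \<le> n" "3 * k' + i' + 2 \<le> n"
  shows "cycle_near n (3 * k + i) (3 * k' + i') \<longleftrightarrow> k = k'"
  using assms by (cases k k' rule: linorder_cases) (auto simp: cycle_near_away_from_wrap)

section \<open>The modular product of two cycles\<close>

lemma modprod_E_iff:
  assumes "\<And>g. \<not> EG g g" and "\<And>h. \<not> EH h h"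
  shows "modprod_E EG EH (g, h) (g', h') \<longleftrightarrow>
    (g, h) \<noteq> (g', h') \<and> ((g = g' \<or> EG g g') \<longleftrightarrow> (h = h' \<or> EH h h'))"
  using assms unfolding modprod_E_def by auto

lemma modprod_cycles_E_iff:
  "modprod_E (cycle_E s) (cycle_E t) x y \<longleftrightarrow>
    x \<noteq> y \<and> (cycle_near s (fst x) (fst y) \<longleftrightarrow> cycle_near t (snd x) (snd y))"
  by (cases x, cases y) (simp add: modprod_E_iff cycle_E_irrefl cycle_near_def)

lemma modprod_cycles_diameter_two:
  assumes "7 \<le> s" "7 \<le> t"
  shows "diameter_two_graph ({0..<s} \<times> {0..<t}) (modprod_E (cycle_E s) (cycle_E t))"
proof
  fix x y :: "nat \<times> nat"
  show "modprod_E (cycle_E s) (cycle_E t) x y \<Longrightarrow> modprod_E (cycle_E s) (cycle_E t) y x"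
    by (cases x, cases y) (auto simp: modprod_cycles_E_iff cycle_near_sym)
  assume "x \<in> {0..<s} \<times> {0..<t}" "y \<in> {0..<s} \<times> {0..<t}"
  then obtain g h g' h' where xy: "x = (g, h)" "y = (g', h')" "g < s" "g' < s" "h < t" "h' < t"
    by auto
  obtain a where "a < s" "\<not> cycle_near s g a" "\<not> cycle_near s g' a"
    using cycle_exists_far assms(1) xy by metis
  moreover obtain b where "b < t" "\<not> cycle_near t h b" "\<not> cycle_near t h' b"
    using cycle_exists_far assms(2) xy by metis
  ultimately show "\<exists>z\<in>{0..<s} \<times> {0..<t}.
      modprod_E (cycle_E s) (cycle_E t) x z \<and> modprod_E (cycle_E s) (cycle_E t) z y"
    using xy by (intro bexI[of _ "(a, b)"]) (auto simp: modprod_cycles_E_iff cycle_near_sym)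
qed

lemma modprod_cycles_escape:
  assumes "7 \<le> s" "7 \<le> t" "x \<in> {0..<s} \<times> {0..<t}" "y \<in> {0..<s} \<times> {0..<t}"
    and "modprod_E (cycle_E s) (cycle_E t) x y"
  shows "\<exists>z\<in>{0..<s} \<times> {0..<t}. modprod_E (cycle_E s) (cycle_E t) x z \<and> z \<noteq> y \<and>
    \<not> modprod_E (cycle_E s) (cycle_E t) y z"
proof -
  obtain g h g' h' where xy: "x = (g, h)" "y = (g', h')" "g < s" "g' < s" "h < t" "h' < t"
    using assms(3,4) by auto
  have "5 \<le> s" "5 \<le> t" using assms(1,2) by simp_all
  show ?thesis
  proof (cases "h = h'")
    case True
    then have "g \<noteq> g'" using assms(5) xy by (simp add: modprod_cycles_E_iff)
    then obtain c where "c < s" "cycle_near s g' c" "\<not> cycle_near s g c"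
      using cycle_exists_private_near \<open>5 \<le> s\<close> xy by metis
    moreover obtain b where "b < t" "\<not> cycle_near t h b"
      using cycle_exists_far[of t h h] assms(2) xy by metis
    ultimately show ?thesis
      using xy True by (intro bexI[of _ "(c, b)"]) (auto simp: modprod_cycles_E_iff)
  next
    case False
    then obtain c where "c < t" "cycle_near t h' c" "\<not> cycle_near t h c"
      using cycle_exists_private_near \<open>5 \<le> t\<close> xy False by metis
    moreover obtain a where "a < s" "\<not> cycle_near s g a" "\<not> cycle_near s g' a"
      using cycle_exists_far assms(1) xy by metis
    ultimately show ?thesis
      using xy by (intro bexI[of _ "(a, c)"]) (auto simp: modprod_cycles_E_iff)
  qed
qed

definition cycle_clique :: "nat \<Rightarrow> nat \<Rightarrow> (nat \<times> nat) set \<Rightarrow> bool" where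
  "cycle_clique s t K \<longleftrightarrow> K \<subseteq> {0..<s} \<times> {0..<t} \<and>
     (\<forall>p\<in>K. \<forall>q\<in>K. p \<noteq> q \<longrightarrow> (cycle_near s (fst p) (fst q) \<longleftrightarrow> cycle_near t (snd p) (snd q)))"

lemma clique_modprod_cycles_iff:
  "clique ({0..<s} \<times> {0..<t}) (modprod_E (cycle_E s) (cycle_E t)) K \<longleftrightarrow> cycle_clique s t K"
  unfolding clique_def cycle_clique_def by (auto simp: modprod_cycles_E_iff)

lemma sdim_modprod_cycles:
  assumes "7 \<le> s" "7 \<le> t" and K: "cycle_clique s t K"
    and max: "\<And>K'. cycle_clique s t K' \<Longrightarrow> card K' \<le> card K"
  shows "sdim (modprod_V (cycle_V s) (cycle_V t)) (modprod_E (cycle_E s) (cycle_E t)) = s * t - card K"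
proof -
  interpret diameter_two_graph "{0..<s} \<times> {0..<t}" "modprod_E (cycle_E s) (cycle_E t)"
    using modprod_cycles_diameter_two assms(1,2) .
  have "sdim ({0..<s} \<times> {0..<t}) (modprod_E (cycle_E s) (cycle_E t))
      = card ({0..<s} \<times> {0..<t}) - card K"
    by (rule sdim_eq_card_minus_clique_number)
      (use strong_resolving_set_iff_clique_complement modprod_cycles_escape[OF assms(1,2)] K max
        in \<open>simp_all add: clique_modprod_cycles_iff\<close>)
  then show ?thesis by (simp add: modprod_V_def cycle_V_def)
qed

section \<open>Sums of sequences with sparse large entries\<close>

lemma sum_lessThan_add_shift:
  fixes x :: "nat \<Rightarrow> 'a::comm_monoid_add"
  shows "(\<Sum>i<m + d. x i) = (\<Sum>i<d. x i) + (\<Sum>i<m. x (i + d))"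
  by (induction m) (simp_all add: add_ac)

lemma sum_periodic_shift:
  fixes f :: "nat \<Rightarrow> 'a::cancel_comm_monoid_add"
  assumes "\<And>g. f (g + n) = f g"
  shows "(\<Sum>i<n. f (c + i)) = (\<Sum>i<n. f i)"
proof (induction c)
  case (Suc c)
  have "f c + (\<Sum>i<n. f (Suc c + i)) = (\<Sum>i<Suc n. f (c + i))"
    unfolding sum.lessThan_Suc_shift by simp
  also have "\<dots> = f c + (\<Sum>i<n. f (c + i))"
    unfolding sum.lessThan_Suc assms[of c] by (rule add.commute)
  finally show ?case using Suc by simp
qed simp

lemma sum_le_window_bound:
  fixes x :: "nat \<Rightarrow> nat"
  assumes "\<And>i. x i \<le> 2" and "\<And>i. x i + x (Suc i) + x (Suc (Suc i)) \<le> 4"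
  shows "(\<Sum>i<n. x i) \<le> 4 * (n div 3) + 2 * (n mod 3)"
  using assms
proof (induction n arbitrary: x rule: less_induct)
  case (less n)
  show ?case
  proof (cases "n < 3")
    case True
    then have "(\<Sum>i<n. x i) \<le> (\<Sum>i<n. 2)" using less.prems(1) by (intro sum_mono) auto
    then show ?thesis using True by simp
  next
    case False
    define k where "k = n - 3"
    have n: "n = Suc (Suc (Suc k))" using False unfolding k_def by simp
    have "(\<Sum>i<k. x (Suc (Suc (Suc i)))) \<le> 4 * (k div 3) + 2 * (k mod 3)"
      by (rule less.IH) (use n less.prems in auto)
    moreover have "(\<Sum>i<n. x i) = x 0 + x 1 + x 2 + (\<Sum>i<k. x (Suc (Suc (Suc i))))"
      unfolding n sum.lessThan_Suc_shift by (simp add: numeral_2_eq_2)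
    moreover have "x 0 + x 1 + x 2 \<le> 4" using less.prems(2)[of 0] by (simp add: numeral_2_eq_2)
    moreover have "n div 3 = Suc (k div 3)" "n mod 3 = k mod 3" unfolding n by simp_all
    ultimately show ?thesis by linarith
  qed
qed

definition paired_twos :: "(nat \<Rightarrow> nat) \<Rightarrow> bool" where
  "paired_twos x \<longleftrightarrow> (\<forall>i. x i \<le> 2) \<and>
     (\<forall>i. 0 < x i \<and> 0 < x (Suc i) \<and> 0 < x (Suc (Suc i)) \<longrightarrow>
        x i = 1 \<and> x (Suc i) = 1 \<and> x (Suc (Suc i)) = 1) \<and>
     (\<forall>i. x (Suc i) = 2 \<longrightarrow> 0 < x i \<or> 0 < x (Suc (Suc i)))"

lemma paired_twos_shift: "paired_twos x \<Longrightarrow> paired_twos (\<lambda>i. x (i + d))"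
  unfolding paired_twos_def by (metis add_Suc)

lemma paired_twosD:
  assumes "paired_twos x"
  shows "x i \<le> 2"
    and "0 < x i \<Longrightarrow> 0 < x (Suc i) \<Longrightarrow> 0 < x (Suc (Suc i)) \<Longrightarrow>
      x i = 1 \<and> x (Suc i) = 1 \<and> x (Suc (Suc i)) = 1"
    and "x (Suc i) = 2 \<Longrightarrow> 0 < x i \<or> 0 < x (Suc (Suc i))"
  using assms[unfolded paired_twos_def, THEN conjunct2, THEN conjunct1, rule_format, of i]
    assms[unfolded paired_twos_def, THEN conjunct2, THEN conjunct2, rule_format, of i]
    assms[unfolded paired_twos_def] by simp_all

definition paired_twos_bound :: "nat \<Rightarrow> nat" where
  "paired_twos_bound n = 4 * (n div 3) + (if n mod 3 = 2 then 4 else n mod 3)"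

lemma paired_twos_bound_steps:
  "paired_twos_bound (Suc (Suc k)) \<le> paired_twos_bound (Suc (Suc (Suc k)))"
  "1 + paired_twos_bound (Suc k) \<le> paired_twos_bound (Suc (Suc (Suc k)))"
  "4 + paired_twos_bound k = paired_twos_bound (Suc (Suc (Suc k)))"
  unfolding paired_twos_bound_def using mod_less_divisor[of 3 k] by (auto simp: div_Suc mod_Suc)

text \<open>The hypothesis on x 0 says that x starts right after a zero entry.\<close>

lemma sum_le_paired_twos_bound:
  assumes "paired_twos x" and "x 0 = 2 \<Longrightarrow> 0 < x 1" and "x n = 0"
  shows "(\<Sum>i<n. x i) \<le> paired_twos_bound n"
  using assms
proof (induction n arbitrary: x rule: less_induct)
  case (less n)
  note le2 = paired_twosD(1)[OF less.prems(1)] and ones = paired_twosD(2)[OF less.prems(1)]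
    and no_isolated = paired_twosD(3)[OF less.prems(1)]
  show ?case
  proof (cases "n < 3")
    case True
    then consider "n = 0" | "n = 1" | "n = 2" by linarith
    then show ?thesis using le2[of 0] le2[of 1] less.prems(2,3)
      by cases (auto simp: paired_twos_bound_def numeral_2_eq_2 le_Suc_eq)
  next
    case False
    define k where "k = n - 3"
    have n: "n = Suc (Suc (Suc k))" using False unfolding k_def by simp
    have IH: "(\<Sum>i<n - d. x (i + d)) \<le> paired_twos_bound (n - d)"
      if "0 < d" "d \<le> n" "x d = 2 \<Longrightarrow> 0 < x (Suc d)" for d
    proof (rule less.IH)
      show "n - d < n" "x (0 + d) = 2 \<Longrightarrow> 0 < x (1 + d)" using that by simp_all
      show "paired_twos (\<lambda>i. x (i + d))" using paired_twos_shift[OF less.prems(1)] .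
      show "x (n - d + d) = 0" using that(2) less.prems(3) by simp
    qed
    have sum: "(\<Sum>i<n. x i) = x 0 + (\<Sum>i<n - 1. x (i + 1))"
      "(\<Sum>i<n. x i) = x 0 + x 1 + (\<Sum>i<n - 2. x (i + 2))"
      "(\<Sum>i<n. x i) = x 0 + x 1 + x 2 + (\<Sum>i<n - 3. x (i + 3))"
      using sum_lessThan_add_shift[where x = x and m = "n - 1" and d = 1]
        sum_lessThan_add_shift[where x = x and m = "n - 2" and d = 2]
        sum_lessThan_add_shift[where x = x and m = "n - 3" and d = 3] n
      by (simp_all add: numeral_2_eq_2 numeral_3_eq_3)
    note bound = paired_twos_bound_steps[of k, folded n]
    consider "x 0 = 0" | "0 < x 0" "x 1 = 0" | "0 < x 0" "0 < x 1" "x 2 = 0"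
      | "0 < x 0" "0 < x 1" "0 < x 2" by linarith
    then show ?thesis
    proof cases
      case 1
      then show ?thesis using sum(1) IH[of 1] no_isolated[of 0] bound n by simp
    next
      case 2
      then have "x 0 \<le> 1" using le2[of 0] less.prems(2) by fastforce
      then show ?thesis using sum(2) IH[of 2] no_isolated[of 1] 2 bound n by (simp add: numeral_2_eq_2)
    next
      case 3
      then have "x 3 = 2 \<Longrightarrow> 0 < x 4" using no_isolated[of 2] by (simp add: eval_nat_numeral)
      then show ?thesis using sum(3) IH[of 3] le2[of 0] le2[of 1] 3 bound n by simp
    next
      case 4
      then have "x 3 \<noteq> 2" using ones[of 1] by (force simp: numeral_2_eq_2 numeral_3_eq_3)
      moreover have "x 0 + x 1 + x 2 = 3" using 4 ones[of 0] by (simp add: numeral_2_eq_2)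
      ultimately show ?thesis using sum(3) IH[of 3] bound n by simp
    qed
  qed
qed

section \<open>Rows of a clique\<close>

definition row_size :: "nat \<Rightarrow> (nat \<times> nat) set \<Rightarrow> nat \<Rightarrow> nat" where
  "row_size s K g = card {h. (g mod s, h) \<in> K}"

lemma row_size_periodic: "row_size s K (g + s) = row_size s K g"
  by (simp add: row_size_def)

lemma cycle_clique_swap:
  "cycle_clique s t K \<Longrightarrow> cycle_clique t s (prod.swap ` K)"
  unfolding cycle_clique_def by (auto simp: cycle_near_sym)

lemma row_size_swap: "row_size t (prod.swap ` K) h = card {g. (g, h mod t) \<in> K}"
  unfolding row_size_def by (rule arg_cong[where f = card]) force

lemma finite_row: "cycle_clique s t K \<Longrightarrow> finite {h. (g, h) \<in> K}"
  by (rule finite_subset[of _ "{..<t}"]) (auto simp: cycle_clique_def)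

lemma empty_row_iff: "cycle_clique s t K \<Longrightarrow> row_size s K g = 0 \<longleftrightarrow> (\<forall>h. (g mod s, h) \<notin> K)"
  unfolding row_size_def using finite_row by fastforce

lemma card_eq_sum_row_size:
  assumes "cycle_clique s t K"
  shows "card K = (\<Sum>g<s. row_size s K g)"
proof -
  have "K = (SIGMA g:{..<s}. {h. (g, h) \<in> K})" using assms unfolding cycle_clique_def by auto
  then have "card K = (\<Sum>g<s. card {h. (g, h) \<in> K})"
    using card_SigmaI[of "{..<s}"] finite_row[OF assms] by (metis finite_lessThan)
  then show ?thesis by (simp add: row_size_def)
qed

lemma card_eq_sum_row_size_from:
  assumes "cycle_clique s t K"
  shows "card K = (\<Sum>i<s. row_size s K (c + i))"
  using card_eq_sum_row_size[OF assms] sum_periodic_shift[where f = "row_size s K", OF row_size_periodic] by simp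

lemma card_le_2_if_no_three_distinct:
  assumes "finite A" and "\<And>a b c. a \<in> A \<Longrightarrow> b \<in> A \<Longrightarrow> c \<in> A \<Longrightarrow> a = b \<or> b = c \<or> a = c"
  shows "card A \<le> 2"
proof (rule ccontr)
  assume "\<not> card A \<le> 2"
  then obtain a B where "A = insert a B" "a \<notin> B" "Suc 1 \<le> card B"
    using card_le_Suc_iff[of 2 A] by auto
  moreover from \<open>Suc 1 \<le> card B\<close> obtain b C where "B = insert b C" "b \<notin> C" "1 \<le> card C"
    using card_le_Suc_iff[of 1 B] by auto
  moreover from \<open>1 \<le> card C\<close> obtain c where "c \<in> C" by (metis card.empty ex_in_conv not_one_le_zero)
  ultimately show False using assms(2)[of a b c] by blast
qed

lemma cycle_clique_near_iff:
  "cycle_clique s t K \<Longrightarrow> (g, h) \<in> K \<Longrightarrow> (g', h') \<in> K \<Longrightarrow> (g, h) \<noteq> (g', h') \<Longrightarrow>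
    cycle_near s g g' \<longleftrightarrow> cycle_near t h h'"
  unfolding cycle_clique_def by fastforce

lemma cycle_clique_bounds: "cycle_clique s t K \<Longrightarrow> (g, h) \<in> K \<Longrightarrow> g < s \<and> h < t"
  unfolding cycle_clique_def by auto

lemma cycle_clique_near_rows:
  assumes "cycle_clique s t K" "(a, h) \<in> K" "(b, h') \<in> K" "a \<noteq> b"
  shows "cycle_near t h h' \<longleftrightarrow> cycle_near s a b"
  using cycle_clique_near_iff[OF assms(1-3)] assms(4) by simp

lemma cycle_clique_same_row:
  assumes "cycle_clique s t K" "(a, h) \<in> K" "(a, h') \<in> K"
  shows "cycle_near t h h'"
  using cycle_clique_near_iff[OF assms] by (cases "h = h'") simp_all

lemma row_size_le_2:
  assumes K: "cycle_clique s t K" and "4 \<le> t"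
  shows "row_size s K g \<le> 2"
  unfolding row_size_def
proof (rule card_le_2_if_no_three_distinct[OF finite_row[OF K]])
  have near: "x \<noteq> y \<Longrightarrow> cycle_near t x y" if "(g mod s, x) \<in> K" "(g mod s, y) \<in> K" for x y
    using cycle_clique_near_iff[OF K that] by simp
  fix a b c assume "a \<in> {h. (g mod s, h) \<in> K}" "b \<in> {h. (g mod s, h) \<in> K}" "c \<in> {h. (g mod s, h) \<in> K}"
  then have "(g mod s, a) \<in> K" "(g mod s, b) \<in> K" "(g mod s, c) \<in> K" by simp_all
  then show "a = b \<or> b = c \<or> a = c"
    using cycle_near_triangle[OF \<open>4 \<le> t\<close>, of a b c] near cycle_clique_bounds[OF K] by blast
qed

lemma cycle_clique_end_row:
  assumes K: "cycle_clique s t K" and "4 \<le> t"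
    and abc: "cycle_near s a b" "cycle_near s b c" "\<not> cycle_near s a c"
    and in_K: "(a, h0) \<in> K" "(b, h1) \<in> K" "(c, h2) \<in> K"
  shows "{h. (a, h) \<in> K} = {h0}"
proof -
  have "a \<noteq> b" "b \<noteq> c" "a \<noteq> c" using abc by auto
  have "cycle_near t h1 h2" "\<not> cycle_near t h0 h2"
    using cycle_clique_near_rows[OF K] in_K abc \<open>b \<noteq> c\<close> \<open>a \<noteq> c\<close> by blast+
  have "h = h0" if h: "(a, h) \<in> K" for h
  proof (rule ccontr)
    assume "h \<noteq> h0"
    have "cycle_near t h0 h" using cycle_clique_same_row[OF K in_K(1) h] .
    moreover have "cycle_near t h h1" "\<not> cycle_near t h h2"
      using cycle_clique_near_rows[OF K h] in_K abc \<open>a \<noteq> b\<close> \<open>a \<noteq> c\<close> by blast+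
    moreover have "cycle_near t h0 h1"
      using cycle_clique_near_rows[OF K in_K(1,2)] abc \<open>a \<noteq> b\<close> by blast
    ultimately have "h0 = h \<or> h = h1 \<or> h0 = h1"
      using cycle_near_triangle[OF \<open>4 \<le> t\<close>] cycle_clique_bounds[OF K] h in_K by blast
    then show False
      using \<open>h \<noteq> h0\<close> \<open>cycle_near t h1 h2\<close> \<open>\<not> cycle_near t h0 h2\<close> \<open>\<not> cycle_near t h h2\<close> by blast
  qed
  then show ?thesis using in_K(1) by blast
qed

lemma cycle_clique_middle_row:
  assumes K: "cycle_clique s t K" and "5 \<le> t"
    and abc: "cycle_near s a b" "cycle_near s b c" "\<not> cycle_near s a c"
    and in_K: "(a, h0) \<in> K" "(b, h1) \<in> K" "(c, h2) \<in> K"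
  shows "{h. (b, h) \<in> K} = {h1}"
proof -
  have "a \<noteq> b" "b \<noteq> c" "a \<noteq> c" using abc by auto
  have near: "cycle_near t h0 h" "cycle_near t h h2" if "(b, h) \<in> K" for h
    using cycle_clique_near_rows[OF K] that in_K abc \<open>a \<noteq> b\<close> \<open>b \<noteq> c\<close> by blast+
  have "\<not> cycle_near t h0 h2" using cycle_clique_near_rows[OF K in_K(1,3)] abc \<open>a \<noteq> c\<close> by blast
  then have "h = h1" if "(b, h) \<in> K" for h
    using cycle_near_middle_unique[OF \<open>5 \<le> t\<close>] near[OF that] near[OF in_K(2)]
      cycle_clique_bounds[OF K] that in_K by blast
  then show ?thesis using in_K(2) by blast
qed

lemma row_size_consecutive_positive:
  assumes K: "cycle_clique s t K" and "5 \<le> s" "5 \<le> t"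
    and pos: "0 < row_size s K g" "0 < row_size s K (Suc g)" "0 < row_size s K (Suc (Suc g))"
  shows "row_size s K g = 1 \<and> row_size s K (Suc g) = 1 \<and> row_size s K (Suc (Suc g)) = 1"
proof -
  have abc: "cycle_near s (g mod s) (Suc g mod s)" "cycle_near s (Suc g mod s) (Suc (Suc g) mod s)"
    "\<not> cycle_near s (g mod s) (Suc (Suc g) mod s)"
    using cycle_near_Suc[of s] cycle_not_near_Suc_Suc \<open>5 \<le> s\<close> by auto
  obtain h0 h1 h2 where in_K: "(g mod s, h0) \<in> K" "(Suc g mod s, h1) \<in> K" "(Suc (Suc g) mod s, h2) \<in> K"
    using pos unfolding row_size_def card_gt_0_iff by auto
  have "4 \<le> t" using \<open>5 \<le> t\<close> by simp
  have "{h. (g mod s, h) \<in> K} = {h0}" "{h. (Suc (Suc g) mod s, h) \<in> K} = {h2}"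
    using cycle_clique_end_row[OF K \<open>4 \<le> t\<close>] abc in_K cycle_near_sym by blast+
  moreover have "{h. (Suc g mod s, h) \<in> K} = {h1}"
    using cycle_clique_middle_row[OF K \<open>5 \<le> t\<close>] abc in_K by blast
  ultimately show ?thesis by (simp add: row_size_def)
qed

lemma row_size_window_le_4:
  assumes "cycle_clique s t K" "5 \<le> s" "5 \<le> t"
  shows "row_size s K g + row_size s K (Suc g) + row_size s K (Suc (Suc g)) \<le> 4"
proof -
  have "4 \<le> t" using assms(3) by simp
  then show ?thesis
    using row_size_consecutive_positive[OF assms, of g] row_size_le_2[OF assms(1), of g]
      row_size_le_2[OF assms(1), of "Suc g"] row_size_le_2[OF assms(1), of "Suc (Suc g)"]
    by fastforce
qed

lemma card_if_all_rows_nonempty: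
  assumes K: "cycle_clique s t K" "5 \<le> s" "5 \<le> t" and "\<And>g. g < s \<Longrightarrow> 0 < row_size s K g"
  shows "card K = s"
proof -
  have "0 < row_size s K g" for g
    using assms(4)[of "g mod s"] \<open>5 \<le> s\<close> by (simp add: row_size_def)
  then have "row_size s K g = 1" for g using row_size_consecutive_positive[OF K] by blast
  then show ?thesis using card_eq_sum_row_size[OF K(1)] by simp
qed

text \<open>A cell outside an isolated row lies in a row far from it, hence in a column far from both
  cells of that row; so the columns around them read 0, 1, 1, 0.\<close>

lemma cell_near_isolated_row:
  assumes K: "cycle_clique s t K" and "5 \<le> s"
    and "row_size s K g = 0" "row_size s K (Suc (Suc g)) = 0"
    and "(Suc g mod s, h) \<in> K" "(x, c) \<in> K" "cycle_near t c h"
  shows "x = Suc g mod s"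
proof (rule ccontr)
  assume "x \<noteq> Suc g mod s"
  then have "cycle_near s (Suc g mod s) x"
    using cycle_clique_near_rows[OF K assms(6,5)] assms(7) cycle_near_sym by blast
  moreover have "0 < s" "x < s" using \<open>5 \<le> s\<close> cycle_clique_bounds[OF K assms(6)] by simp_all
  ultimately have "x = g mod s \<or> x = Suc (Suc g) mod s"
    using cycle_near_Suc_cases \<open>x \<noteq> Suc g mod s\<close> by blast
  then show False using assms(3,4,6) unfolding empty_row_iff[OF K] by auto
qed

lemma isolated_double_row:
  assumes K: "cycle_clique s t K" and "5 \<le> s" "5 \<le> t"
    and rows: "row_size s K g = 0" "row_size s K (Suc g) = 2" "row_size s K (Suc (Suc g)) = 0"
  obtains k where "row_size t (prod.swap ` K) k = 0" "row_size t (prod.swap ` K) (Suc k) = 1"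
    "row_size t (prod.swap ` K) (Suc (Suc k)) = 1" "row_size t (prod.swap ` K) (Suc (Suc (Suc k))) = 0"
proof -
  define b where "b = Suc g mod s"
  have "0 < t" "2 \<le> t" using \<open>5 \<le> t\<close> by simp_all
  obtain p q where pq: "{h. (b, h) \<in> K} = {p, q}" "p \<noteq> q"
    using rows(2) unfolding row_size_def b_def card_2_iff by blast
  then have "p < t" "q < t" "cycle_near t p q"
    using cycle_clique_same_row[OF K] cycle_clique_bounds[OF K] by blast+
  then obtain k where k: "{p, q} = {Suc k mod t, Suc (Suc k) mod t}"
    using cycle_near_obtain_Suc[OF \<open>0 < t\<close>] \<open>p \<noteq> q\<close> by blast
  have column: "{x. (x, c) \<in> K} = (if c \<in> {p, q} then {b} else {})"
    if "cycle_near t c h" "h \<in> {p, q}" for c h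
    using cell_near_isolated_row[OF K \<open>5 \<le> s\<close> rows(1,3)] that pq(1) unfolding b_def[symmetric] by auto
  have "k mod t \<noteq> Suc k mod t" "Suc (Suc (Suc k)) mod t \<noteq> Suc (Suc k) mod t"
    using mod_Suc_neq[OF \<open>2 \<le> t\<close>] by metis+
  moreover have "k mod t \<noteq> Suc (Suc k) mod t" "Suc (Suc (Suc k)) mod t \<noteq> Suc k mod t"
    using cycle_not_near_Suc_Suc[OF \<open>5 \<le> t\<close>] cycle_near_refl cycle_near_sym by metis+
  ultimately have "k mod t \<notin> {p, q}" "Suc (Suc (Suc k)) mod t \<notin> {p, q}" unfolding k by auto
  moreover have "cycle_near t (k mod t) (Suc k mod t)"
    "cycle_near t (Suc (Suc (Suc k)) mod t) (Suc (Suc k) mod t)"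
    using cycle_near_Suc[OF \<open>0 < t\<close>] cycle_near_sym by blast+
  moreover have "Suc k mod t \<in> {p, q}" "Suc (Suc k) mod t \<in> {p, q}" unfolding k by simp_all
  ultimately have "{x. (x, k mod t) \<in> K} = {}" "{x. (x, Suc k mod t) \<in> K} = {b}"
    "{x. (x, Suc (Suc k) mod t) \<in> K} = {b}" "{x. (x, Suc (Suc (Suc k)) mod t) \<in> K} = {}"
    using column[of "k mod t" "Suc k mod t"] column[of "Suc k mod t" "Suc k mod t"]
      column[of "Suc (Suc k) mod t" "Suc (Suc k) mod t"]
      column[of "Suc (Suc (Suc k)) mod t" "Suc (Suc k) mod t"] by simp_all
  then show ?thesis using that[of k] unfolding row_size_swap by simp
qed

section \<open>An upper bound for cliques\<close>

lemma card_from_empty_row: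
  assumes "cycle_clique s t K" "0 < s" "row_size s K g0 = 0"
  shows "card K = (\<Sum>i<s - 1. row_size s K (g0 + Suc i))"
proof -
  have "card K = (\<Sum>i<Suc (s - 1). row_size s K (g0 + i))"
    using card_eq_sum_row_size_from[OF assms(1)] \<open>0 < s\<close> by simp
  then show ?thesis unfolding sum.lessThan_Suc_shift using assms(3) by simp
qed

lemma cycle_clique_card_le:
  assumes K: "cycle_clique s t K" and "5 \<le> s" "5 \<le> t"
  shows "card K \<le> 4 * (s div 3) + (if s mod 3 = 2 then 2 else 0)"
proof (cases "\<forall>g<s. 0 < row_size s K g")
  case True
  then have "card K = s" using card_if_all_rows_nonempty[OF assms] by blast
  moreover have "s = 3 * (s div 3) + s mod 3" "s mod 3 < 3" by simp_all
  ultimately show ?thesis using \<open>5 \<le> s\<close> by (cases "s mod 3 = 2"; simp; linarith)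
next
  case False
  then obtain g0 where "row_size s K g0 = 0" by blast
  then have "card K = (\<Sum>i<s - 1. row_size s K (g0 + Suc i))"
    using card_from_empty_row[OF K] \<open>5 \<le> s\<close> by simp
  also have "\<dots> \<le> 4 * ((s - 1) div 3) + 2 * ((s - 1) mod 3)"
    using row_size_le_2[OF K] row_size_window_le_4[OF assms] \<open>5 \<le> t\<close>
    by (intro sum_le_window_bound) simp_all
  also have "\<dots> = 4 * (s div 3) + (if s mod 3 = 2 then 2 else 0)"
  proof -
    obtain n where s: "s = Suc n" using \<open>5 \<le> s\<close> by (cases s) auto
    have "n mod 3 = 0 \<or> n mod 3 = 1 \<or> n mod 3 = 2" by arith
    then show ?thesis unfolding s by (auto simp: div_Suc mod_Suc)
  qed
  finally show ?thesis .
qed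

lemma card_le_if_isolated_double_row:
  assumes K: "cycle_clique s t K" and "5 \<le> s" "5 \<le> t"
    and "row_size s K g = 0" "row_size s K (Suc g) = 2" "row_size s K (Suc (Suc g)) = 0"
  shows "card K \<le> 2 + (4 * ((t - 4) div 3) + 2 * ((t - 4) mod 3))"
proof -
  let ?col = "row_size t (prod.swap ` K)"
  obtain k where k: "?col k = 0" "?col (Suc k) = 1" "?col (Suc (Suc k)) = 1" "?col (Suc (Suc (Suc k))) = 0"
    using isolated_double_row[OF assms] by blast
  have K': "cycle_clique t s (prod.swap ` K)" using cycle_clique_swap[OF K] .
  have "card K = card (prod.swap ` K)" by (simp add: card_image)
  also have "\<dots> = (\<Sum>i<(t - 4) + 4. ?col (k + i))"
    using card_eq_sum_row_size_from[OF K'] \<open>5 \<le> t\<close> by simp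
  also have "\<dots> = 2 + (\<Sum>i<t - 4. ?col (k + 4 + i))"
    unfolding sum_lessThan_add_shift using k by (simp add: numeral_eq_Suc add_ac)
  also have "\<dots> \<le> 2 + (4 * ((t - 4) div 3) + 2 * ((t - 4) mod 3))"
  proof (intro add_left_mono sum_le_window_bound)
    show "?col (k + 4 + i) \<le> 2" for i using row_size_le_2[OF K'] \<open>5 \<le> s\<close> by simp
    show "?col (k + 4 + i) + ?col (k + 4 + Suc i) + ?col (k + 4 + Suc (Suc i)) \<le> 4" for i
      using row_size_window_le_4[OF K' \<open>5 \<le> t\<close> \<open>5 \<le> s\<close>, of "k + 4 + i"] by simp
  qed
  finally show ?thesis .
qed

lemma paired_twos_row_size:
  assumes K: "cycle_clique s t K" and "5 \<le> s" "5 \<le> t"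
    and no_isolated: "\<And>g. \<not> (row_size s K g = 0 \<and> row_size s K (Suc g) = 2 \<and> row_size s K (Suc (Suc g)) = 0)"
  shows "paired_twos (\<lambda>i. row_size s K (c + i))"
proof -
  have "row_size s K (c + i) \<le> 2" for i using row_size_le_2[OF K] \<open>5 \<le> t\<close> by simp
  moreover have "row_size s K (c + i) = 1 \<and> row_size s K (c + Suc i) = 1 \<and> row_size s K (c + Suc (Suc i)) = 1"
    if "0 < row_size s K (c + i)" "0 < row_size s K (c + Suc i)" "0 < row_size s K (c + Suc (Suc i))" for i
    using row_size_consecutive_positive[OF assms(1-3), of "c + i"] that by simp
  moreover have "0 < row_size s K (c + i) \<or> 0 < row_size s K (c + Suc (Suc i))"
    if "row_size s K (c + Suc i) = 2" for i
    using no_isolated[of "c + i"] that by auto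
  ultimately show ?thesis unfolding paired_twos_def by blast
qed

lemma card_le_without_isolated_double_row:
  assumes K: "cycle_clique s t K" and "5 \<le> s" "5 \<le> t" and "row_size s K g0 = 0"
    and no_isolated: "\<And>g. \<not> (row_size s K g = 0 \<and> row_size s K (Suc g) = 2 \<and> row_size s K (Suc (Suc g)) = 0)"
  shows "card K \<le> paired_twos_bound (s - 1)"
proof -
  let ?x = "\<lambda>i. row_size s K (Suc g0 + i)"
  have "card K = (\<Sum>i<s - 1. ?x i)" using card_from_empty_row[OF K] assms(2,4) by simp
  also have "\<dots> \<le> paired_twos_bound (s - 1)"
  proof (rule sum_le_paired_twos_bound)
    show "paired_twos ?x" using paired_twos_row_size[OF assms(1-3) no_isolated] .
    show "?x 0 = 2 \<Longrightarrow> 0 < ?x 1" using no_isolated[of g0] assms(4) by auto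
    show "?x (s - 1) = 0" using assms(4) row_size_periodic[of s K g0] \<open>5 \<le> s\<close> by simp
  qed
  finally show ?thesis .
qed

lemma cycle_clique_card_le_square:
  assumes K: "cycle_clique s s K" and "5 \<le> s" "s mod 3 = 2"
  shows "card K \<le> 4 * (s div 3) + 1"
proof -
  have s: "s = 3 * (s div 3) + 2" "s - 4 = 1 + 3 * (s div 3 - 1)" "s - 1 = 1 + 3 * (s div 3)" "1 \<le> s div 3"
    using div_mult_mod_eq[of s 3] assms(2,3) by linarith+
  show ?thesis
  proof (cases "\<exists>g. row_size s K g = 0 \<and> row_size s K (Suc g) = 2 \<and> row_size s K (Suc (Suc g)) = 0")
    case True
    then have "card K \<le> 2 + (4 * ((s - 4) div 3) + 2 * ((s - 4) mod 3))"
      using card_le_if_isolated_double_row[OF K assms(2,2)] by blast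
    also have "\<dots> = 4 * (s div 3)" using s(2,4) by (simp add: div_Suc mod_Suc)
    finally show ?thesis by simp
  next
    case False
    show ?thesis
    proof (cases "\<forall>g<s. 0 < row_size s K g")
      case True
      then have "card K = s" using card_if_all_rows_nonempty[OF K assms(2,2)] by blast
      then show ?thesis using s(1,4) by linarith
    next
      case no_empty_row: False
      then obtain g0 where "row_size s K g0 = 0" by blast
      then have "card K \<le> paired_twos_bound (s - 1)"
        using card_le_without_isolated_double_row[OF K assms(2,2)] False by blast
      also have "\<dots> = 4 * (s div 3) + 1" using s(3) by (simp add: paired_twos_bound_def)
      finally show ?thesis .
    qed
  qed
qed

definition cycle_clique_number :: "nat \<Rightarrow> nat \<Rightarrow> nat" where
  "cycle_clique_number s t = 4 * min (s div 3) (t div 3) +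
     (if min s t mod 3 = 0 \<or> min s t mod 3 = 1 then 0 else if s = t then 1 else 2)"

lemma cycle_clique_number_commute: "cycle_clique_number s t = cycle_clique_number t s"
  by (auto simp: cycle_clique_number_def min.commute)

lemma cycle_clique_number_if_le:
  assumes "s \<le> t"
  shows "cycle_clique_number s t = 4 * (s div 3) + (if s mod 3 = 2 then if s = t then 1 else 2 else 0)"
proof -
  have "min (s div 3) (t div 3) = s div 3" using div_le_mono[OF assms] by simp
  moreover have "s mod 3 = 0 \<or> s mod 3 = 1 \<or> s mod 3 = 2" by arith
  ultimately show ?thesis using assms by (auto simp: cycle_clique_number_def min_def)
qed

lemma card_le_cycle_clique_number:
  assumes "cycle_clique s t K" "5 \<le> s" "5 \<le> t"
  shows "card K \<le> cycle_clique_number s t"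
proof -
  have le: "card K \<le> cycle_clique_number s t" if K: "cycle_clique s t K" "5 \<le> s" "s \<le> t" for s t K
  proof (cases "s = t \<and> s mod 3 = 2")
    case True
    then have "s = t" "s mod 3 = 2" by auto
    then show ?thesis using cycle_clique_card_le_square[of s K] K by (simp add: cycle_clique_number_if_le)
  next
    case False
    then show ?thesis using cycle_clique_card_le[OF K(1,2)] K by (auto simp: cycle_clique_number_if_le)
  qed
  show ?thesis
  proof (cases "s \<le> t")
    case False
    have "card K = card (prod.swap ` K)" by (simp add: card_image)
    then show ?thesis
      using le[OF cycle_clique_swap[OF assms(1)] assms(3)] False cycle_clique_number_commute by simp
  qed (use le assms in blast)
qed

section \<open>Cliques attaining the bound\<close>

definition diagonal_blocks :: "nat \<Rightarrow> (nat \<times> nat) set" where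
  "diagonal_blocks m = (\<Union>k<m. {3 * k, 3 * k + 1} \<times> {3 * k, 3 * k + 1})"

lemma card_diagonal_blocks: "card (diagonal_blocks m) = 4 * m"
proof (induction m)
  case (Suc m)
  have "diagonal_blocks (Suc m) = diagonal_blocks m \<union> {3 * m, 3 * m + 1} \<times> {3 * m, 3 * m + 1}"
    unfolding diagonal_blocks_def by (simp add: lessThan_Suc Un_commute)
  moreover have "diagonal_blocks m \<inter> {3 * m, 3 * m + 1} \<times> {3 * m, 3 * m + 1} = {}"
    unfolding diagonal_blocks_def by auto
  ultimately show ?case
    using Suc by (simp add: card_Un_disjoint card_cartesian_product diagonal_blocks_def)
qed (simp add: diagonal_blocks_def)

lemma mem_diagonal_blocks:
  "(g, h) \<in> diagonal_blocks m \<longleftrightarrow> (\<exists>k<m. \<exists>i\<le>1. \<exists>j\<le>1. g = 3 * k + i \<and> h = 3 * k + j)"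
  unfolding diagonal_blocks_def by (auto simp: le_Suc_eq)

lemma cycle_clique_diagonal_blocks:
  assumes "3 * m \<le> s" "3 * m \<le> t"
  shows "cycle_clique s t (diagonal_blocks m)"
  unfolding cycle_clique_def
proof (intro conjI ballI impI)
  show "diagonal_blocks m \<subseteq> {0..<s} \<times> {0..<t}"
    using assms by (auto simp: mem_diagonal_blocks)
  fix p q assume pq: "p \<in> diagonal_blocks m" "q \<in> diagonal_blocks m"
  obtain k i j where "k < m" "i \<le> 1" "j \<le> 1" "p = (3 * k + i, 3 * k + j)"
    using pq(1) mem_diagonal_blocks[of "fst p" "snd p" m] by (auto simp: prod_eq_iff)
  moreover obtain k' i' j' where "k' < m" "i' \<le> 1" "j' \<le> 1" "q = (3 * k' + i', 3 * k' + j')"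
    using pq(2) mem_diagonal_blocks[of "fst q" "snd q" m] by (auto simp: prod_eq_iff)
  ultimately show "cycle_near s (fst p) (fst q) \<longleftrightarrow> cycle_near t (snd p) (snd q)"
    using assms cycle_near_block_offsets[of i i' k s k'] cycle_near_block_offsets[of j j' k t k'] by simp
qed

definition cap_cells :: "nat \<Rightarrow> nat \<Rightarrow> (nat \<times> nat) set" where
  "cap_cells s t = (if s mod 3 = 2
     then {3 * (s div 3)} \<times> (if s = t then {3 * (s div 3)} else {3 * (s div 3), 3 * (s div 3) + 1})
     else {})"

lemma card_cap_cells: "card (cap_cells s t) = (if s mod 3 = 2 then if s = t then 1 else 2 else 0)"
  by (simp add: cap_cells_def card_cartesian_product)

lemma cycle_clique_blocks_cap:
  assumes "s \<le> t"
  shows "cycle_clique s t (diagonal_blocks (s div 3) \<union> cap_cells s t)"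
proof (cases "s mod 3 = 2")
  case True
  define m where "m = s div 3"
  have s: "s = 3 * m + 2" using div_mult_mod_eq[of s 3] True unfolding m_def by linarith
  define C where "C = (if s = t then {3 * m} else {3 * m, 3 * m + 1})"
  have cap: "cap_cells s t = {3 * m} \<times> C" using True unfolding cap_cells_def C_def m_def by simp
  have C: "e < t" if "e \<in> C" for e using that s \<open>s \<le> t\<close> by (auto simp: C_def split: if_splits)
  have far: "\<not> cycle_near s g (3 * m) \<and> \<not> cycle_near t h e"
    if "(g, h) \<in> diagonal_blocks m" "e \<in> C" for g h e
    using that mem_diagonal_blocks[of g h m] C[OF that(2)] s \<open>s \<le> t\<close>
    by (auto simp: cycle_near_iff C_def split: if_splits)
  then have far': "\<not> cycle_near s (3 * m) g \<and> \<not> cycle_near t e h"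
    if "(g, h) \<in> diagonal_blocks m" "e \<in> C" for g h e
    using that cycle_near_sym by blast
  have cap_near: "cycle_near t e e'" if "e \<in> C" "e' \<in> C" for e e'
    using that C s \<open>s \<le> t\<close> by (auto simp: cycle_near_iff C_def split: if_splits)
  have "cycle_clique s t (diagonal_blocks m)" using cycle_clique_diagonal_blocks s \<open>s \<le> t\<close> by simp
  then show ?thesis
    using far far' cap_near C s unfolding cycle_clique_def cap m_def[symmetric] by auto
next
  case False
  then show ?thesis
    using cycle_clique_diagonal_blocks[of "s div 3" s t] \<open>s \<le> t\<close> by (simp add: cap_cells_def)
qed

lemma exists_cycle_clique_card:
  "\<exists>K. cycle_clique s t K \<and> card K = cycle_clique_number s t"
proof -
  have ex: "\<exists>K. cycle_clique s t K \<and> card K = cycle_clique_number s t" if "s \<le> t" for s t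
  proof (intro exI conjI)
    show "cycle_clique s t (diagonal_blocks (s div 3) \<union> cap_cells s t)"
      using cycle_clique_blocks_cap[OF that] .
    have "diagonal_blocks (s div 3) \<inter> cap_cells s t = {}"
      by (auto simp: cap_cells_def mem_diagonal_blocks)
    moreover have "finite (diagonal_blocks (s div 3))" "finite (cap_cells s t)"
      by (simp_all add: diagonal_blocks_def cap_cells_def)
    ultimately show "card (diagonal_blocks (s div 3) \<union> cap_cells s t) = cycle_clique_number s t"
      using that by (simp add: card_Un_disjoint card_diagonal_blocks card_cap_cells cycle_clique_number_if_le)
  qed
  show ?thesis
  proof (cases "s \<le> t")
    case False
    then obtain K where "cycle_clique t s K" "card K = cycle_clique_number t s" using ex[of t s] by auto
    then have "cycle_clique s t (prod.swap ` K)" "card (prod.swap ` K) = cycle_clique_number s t"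
      using cycle_clique_swap cycle_clique_number_commute by (simp_all add: card_image)
    then show ?thesis by blast
  qed (use ex in blast)
qed

theorem mainTheorem10:
  fixes s t :: nat
  assumes "s \<ge> 7" and "t \<ge> 7"
  defines "r \<equiv> (if min s t mod 3 = 0 \<or> min s t mod 3 = 1 then 0
                 else if s = t then 1 else 2)"
  shows "int (sdim (modprod_V (cycle_V s) (cycle_V t)) (modprod_E (cycle_E s) (cycle_E t)))
         = int (s * t) - 4 * int (min (s div 3) (t div 3)) - int r"
proof -
  obtain K where K: "cycle_clique s t K" "card K = cycle_clique_number s t"
    using exists_cycle_clique_card by blast
  have "sdim (modprod_V (cycle_V s) (cycle_V t)) (modprod_E (cycle_E s) (cycle_E t))
      = s * t - cycle_clique_number s t"
    using sdim_modprod_cycles[OF assms(1,2) K(1)] card_le_cycle_clique_number assms(1,2) K(2) by simp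
  moreover have "cycle_clique_number s t \<le> s * t"
    using card_mono[of "{0..<s} \<times> {0..<t}" K] K unfolding cycle_clique_def by simp
  ultimately show ?thesis unfolding r_def cycle_clique_number_def by (simp add: of_nat_diff)
qed

end
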